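(* Let $1\ge l_1\ge l_2\ge\dots\ge l_p>0$ and let $\Omega=J_l$ be the sorted $\ell_1$ (SLOPE) norm. Fix $J\subset\{1,\dots,p\}$ and let $g$ be the gauge norm described in the context, built from all subsets $S\subset\{1,\dots,p\}$ as allowed sets. Then $g(\beta)=l_p\|\beta\|_1$ for all $\beta\in\mathbb{R}^p$.
   Context: $J_l(\beta):=l_1|\beta|_{(1)}+\dots+l_p|\beta|_{(p)}$, where $|\beta|_{(1)}\ge\dots\ge|\beta|_{(p)}$ are the ordered absolute values of the entries of $\beta$. For $S\subset\{1,\dots,p\}$, $\beta_S$ is the vector with entries $\beta_j1\{j\in S\}$, and $|\beta|_{(1,S)}\ge\dots\ge|\beta|_{(|S|,S)}$ denote the ordered values of $\{|\beta_j|:j\in S\}$. Every $S$ is allowed, with $\Omega^{S^{c}}(\beta_{S^{c}}):=\sum_{i=1}^{|S^{c}|}l_{|S|+i}|\beta|_{(i,S^{c})}$, and $\Upsilon_S(\beta):=J_l(\beta_S)+\Omega^{S^{c}}(\beta_{S^{c}})=\sum_{j=1}^{|S|}l_j|\beta|_{(j,S)}+\sum_{i=1}^{|S^{c}|}l_{|S|+i}|\beta|_{(i,S^{c})}$. Let $\beta_{f(J)}:=\beta_J-\beta_{J^{c}}$, $\mathrm{flip}_J(B):=\{\beta_{f(J)}:\beta\in B\}$, $\overline{B}:=\bigcup_{S}\{\beta:\Upsilon_S(\beta)\le1\}$, $B_g:=\mathrm{Conv}(\overline{B}\cup\mathrm{flip}_J(\overline{B}))$, and $g(x):=\inf\{t>0:x\in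 tB_g\}$. *)

theory Defs
  imports "HOL-Analysis.Analysis" "HOL-Library.Multiset"
begin

text \<open>Vectors in R^p are modelled as real ^ 'n with p = CARD('n).
  Weights l are indexed l 1, ..., l p (l :: nat => real).\<close>

text \<open>Ordered absolute values of the entries of beta indexed by S, in nonincreasing
  order; element number k-1 (0-based) of this list is |beta|_(k,S).\<close>
definition ord_abs :: "real ^ 'n \<Rightarrow> 'n set \<Rightarrow> real list" where
  "ord_abs \<beta> S = rev (sorted_list_of_multiset (image_mset (\<lambda>j. \<bar>\<beta> $ j\<bar>) (mset_set S)))"

definition J_l :: "(nat \<Rightarrow> real) \<Rightarrow> real ^ 'n \<Rightarrow> real" where
  "J_l l \<beta> = (\<Sum>i<CARD('n). l (Suc i) * (ord_abs \<beta> UNIV ! i))"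

definition restr :: "real ^ 'n \<Rightarrow> 'n set \<Rightarrow> real ^ 'n" where
  "restr \<beta> S = (\<chi> j. if j \<in> S then \<beta> $ j else 0)"

definition Omega_c :: "(nat \<Rightarrow> real) \<Rightarrow> 'n set \<Rightarrow> real ^ 'n \<Rightarrow> real" where
  "Omega_c l S \<beta> = (\<Sum>i<card (- S). l (card S + Suc i) * (ord_abs \<beta> (- S) ! i))"

definition Upsilon :: "(nat \<Rightarrow> real) \<Rightarrow> 'n set \<Rightarrow> real ^ 'n \<Rightarrow> real" where
  "Upsilon l S \<beta> = J_l l (restr \<beta> S) + Omega_c l S (restr \<beta> (- S))"

definition flip :: "'n set \<Rightarrow> real ^ 'n \<Rightarrow> real ^ 'n" where
  "flip J \<beta> = (\<chi> j. if j \<in> J then \<beta> $ j else - \<beta> $ j)"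

definition Bbar :: "(nat \<Rightarrow> real) \<Rightarrow> (real ^ 'n) set" where
  "Bbar l = (\<Union>S. {\<beta>. Upsilon l S \<beta> \<le> 1})"

definition Bg :: "(nat \<Rightarrow> real) \<Rightarrow> 'n set \<Rightarrow> (real ^ 'n) set" where
  "Bg l J = convex hull (Bbar l \<union> flip J ` Bbar l)"

definition gauge_g :: "(nat \<Rightarrow> real) \<Rightarrow> 'n set \<Rightarrow> real ^ 'n \<Rightarrow> real" where
  "gauge_g l J x = Inf {t. t > 0 \<and> x \<in> (\<lambda>y. t *\<^sub>R y) ` Bg l J}"

end

theory Submission
  imports Defs
begin

text \<open>Every \<open>\<Upsilon>\<^sub>S\<close> uses each weight once and all weights are at least \<open>l\<^sub>p\<close>, so
  \<open>\<Upsilon>\<^sub>S(\<beta>) \<ge> l\<^sub>p \<parallel>\<beta>\<parallel>\<^sub>1\<close> and the whole of \<open>B\<^sub>g\<close> lies in the \<open>\<ell>\<^sub>1\<close>-ball of radius \<open>1/l\<^sub>p\<close>, which is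
  convex and invariant under sign flips. Conversely, for \<open>S = {j}\<^sup>c\<close> the vector \<open>c e\<^sub>j\<close> has
  \<open>\<Upsilon>\<^sub>S(c e\<^sub>j) = l\<^sub>p |c|\<close>, so all vertices \<open>\<plusminus>e\<^sub>j/l\<^sub>p\<close> of that ball lie in \<open>B\<^sub>g\<close>. Hence \<open>B\<^sub>g\<close> is
  exactly this ball and its gauge is \<open>l\<^sub>p \<parallel>\<beta>\<parallel>\<^sub>1\<close>.\<close>

lemma mset_ord_abs: "mset (ord_abs \<beta> S) = image_mset (\<lambda>j. \<bar>\<beta> $ j\<bar>) (mset_set S)"
  by (simp add: ord_abs_def)

lemma length_ord_abs: "length (ord_abs (\<beta> :: real ^ 'n::finite) S) = card S"
  by (metis mset_ord_abs size_mset size_image_mset size_mset_set)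

lemma sum_list_ord_abs: "sum_list (ord_abs (\<beta> :: real ^ 'n::finite) S) = (\<Sum>j\<in>S. \<bar>\<beta> $ j\<bar>)"
  by (metis mset_ord_abs sum_mset_sum_list sum_unfold_sum_mset)

lemma set_ord_abs: "set (ord_abs (\<beta> :: real ^ 'n::finite) S) = (\<lambda>j. \<bar>\<beta> $ j\<bar>) ` S"
  by (metis mset_ord_abs set_mset_mset set_image_mset finite finite_set_mset_mset_set)

lemma sum_list_weighted_ge:
  fixes xs :: "real list"
  assumes "\<And>i. i < length xs \<Longrightarrow> c \<le> w i" and "\<And>x. x \<in> set xs \<Longrightarrow> 0 \<le> x"
  shows "c * sum_list xs \<le> (\<Sum>i<length xs. w i * xs ! i)"
proof -
  have "c * sum_list xs = (\<Sum>i<length xs. c * xs ! i)"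
    by (simp add: sum_list_sum_nth sum_distrib_left atLeast0LessThan)
  also have "\<dots> \<le> (\<Sum>i<length xs. w i * xs ! i)"
    by (intro sum_mono mult_right_mono) (auto simp: assms)
  finally show ?thesis .
qed

lemma l1_le_Upsilon:
  fixes l :: "nat \<Rightarrow> real" and \<beta> :: "real ^ 'n::finite"
  assumes mono: "\<And>i j. 1 \<le> i \<Longrightarrow> i \<le> j \<Longrightarrow> j \<le> CARD('n) \<Longrightarrow> l j \<le> l i"
  shows "l CARD('n) * (\<Sum>j\<in>UNIV. \<bar>\<beta> $ j\<bar>) \<le> Upsilon l S \<beta>"
proof -
  let ?L = "l CARD('n)"
  let ?xs = "ord_abs (restr \<beta> S) UNIV"
  let ?ys = "ord_abs (restr \<beta> (-S)) (-S)"
  have card_split: "card S + card (-S) = CARD('n)"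
    using card_Un_disjoint[of S "-S"] by simp
  have "?L * sum_list ?xs \<le> (\<Sum>i<length ?xs. l (Suc i) * ?xs ! i)"
  proof (rule sum_list_weighted_ge)
    fix i assume "i < length ?xs"
    then show "?L \<le> l (Suc i)" by (intro mono) (auto simp: length_ord_abs)
  qed (auto simp: set_ord_abs)
  then have on_S: "?L * (\<Sum>j\<in>S. \<bar>\<beta> $ j\<bar>) \<le> J_l l (restr \<beta> S)"
    by (simp add: J_l_def length_ord_abs sum_list_ord_abs restr_def if_distrib sum.If_cases)
  have "?L * sum_list ?ys \<le> (\<Sum>i<length ?ys. l (card S + Suc i) * ?ys ! i)"
  proof (rule sum_list_weighted_ge)
    fix i assume "i < length ?ys"
    then show "?L \<le> l (card S + Suc i)"
      using card_split by (intro mono) (auto simp: length_ord_abs)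
  qed (auto simp: set_ord_abs)
  then have off_S: "?L * (\<Sum>j\<in>-S. \<bar>\<beta> $ j\<bar>) \<le> Omega_c l S (restr \<beta> (-S))"
    by (simp add: Omega_c_def length_ord_abs sum_list_ord_abs restr_def)
  have "(\<Sum>j\<in>UNIV. \<bar>\<beta> $ j\<bar>) = (\<Sum>j\<in>S. \<bar>\<beta> $ j\<bar>) + (\<Sum>j\<in>-S. \<bar>\<beta> $ j\<bar>)"
    using sum.union_disjoint[of S "-S" "\<lambda>j. \<bar>\<beta> $ j\<bar>"] by simp
  with on_S off_S show ?thesis
    by (simp add: Upsilon_def distrib_left)
qed

lemma l1_flip: "(\<Sum>j\<in>UNIV. \<bar>flip J x $ j\<bar>) = (\<Sum>j\<in>UNIV. \<bar>x $ j\<bar>)"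
  by (rule sum.cong) (auto simp: flip_def)

lemma convex_l1_ball: "convex {x :: real ^ 'n::finite. (\<Sum>j\<in>UNIV. \<bar>x $ j\<bar>) \<le> r}"
proof (rule convexI)
  fix x y :: "real ^ 'n" and u v :: real
  assume x: "x \<in> {x. (\<Sum>j\<in>UNIV. \<bar>x $ j\<bar>) \<le> r}" and y: "y \<in> {x. (\<Sum>j\<in>UNIV. \<bar>x $ j\<bar>) \<le> r}"
    and u: "0 \<le> u" and v: "0 \<le> v" and uv: "u + v = 1"
  have "(\<Sum>j\<in>UNIV. \<bar>(u *\<^sub>R x + v *\<^sub>R y) $ j\<bar>) \<le> (\<Sum>j\<in>UNIV. u * \<bar>x $ j\<bar> + v * \<bar>y $ j\<bar>)"
    using u v by (intro sum_mono) (simp add: abs_triangle_ineq[THEN order_trans] abs_mult)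
  also have "\<dots> = u * (\<Sum>j\<in>UNIV. \<bar>x $ j\<bar>) + v * (\<Sum>j\<in>UNIV. \<bar>y $ j\<bar>)"
    by (simp add: sum.distrib sum_distrib_left)
  also have "\<dots> \<le> u * r + v * r"
    using x y u v by (intro add_mono mult_left_mono) auto
  finally show "u *\<^sub>R x + v *\<^sub>R y \<in> {x. (\<Sum>j\<in>UNIV. \<bar>x $ j\<bar>) \<le> r}"
    using uv by (simp add: distrib_right[symmetric])
qed

lemma l1_ball_subset_convex_hull_axes:
  fixes x :: "real ^ 'n::finite"
  assumes "(\<Sum>j\<in>UNIV. \<bar>x $ j\<bar>) \<le> r"
  shows "x \<in> convex hull {c *\<^sub>R axis j 1 | c j. \<bar>c\<bar> \<le> r}"
proof -
  let ?s = "\<Sum>j\<in>UNIV. \<bar>x $ j\<bar>"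
  have axis_in: "c *\<^sub>R axis j 1 \<in> convex hull {c *\<^sub>R axis j 1 | c j. \<bar>c\<bar> \<le> r}"
    if "\<bar>c\<bar> \<le> r" for c and j :: 'n
    using that by (intro hull_inc) blast
  show ?thesis
  proof (cases "?s = 0")
    case True
    then have "x = 0 *\<^sub>R axis undefined 1"
      by (simp add: vec_eq_iff sum_nonneg_eq_0_iff)
    then show ?thesis
      using True assms axis_in[of 0] by simp
  next
    case False
    then have s_pos: "?s > 0"
      by (simp add: order_le_neq_trans sum_nonneg)
    have "(\<Sum>j\<in>UNIV. (\<bar>x $ j\<bar> / ?s) *\<^sub>R ((?s * sgn (x $ j)) *\<^sub>R axis j 1)) \<in> convex hull {c *\<^sub>R axis j 1 | c j. \<bar>c\<bar> \<le> r}"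
    proof (rule convex_sum)
      show "(\<Sum>j\<in>UNIV. \<bar>x $ j\<bar> / ?s) = 1"
        using False by (simp add: sum_divide_distrib[symmetric])
      show "(?s * sgn (x $ j)) *\<^sub>R axis j 1 \<in> convex hull {c *\<^sub>R axis j 1 | c j. \<bar>c\<bar> \<le> r}" for j
        using s_pos assms by (intro axis_in) (simp add: abs_mult abs_sgn_eq)
    qed (use s_pos in auto)
    also have "(\<Sum>j\<in>UNIV. (\<bar>x $ j\<bar> / ?s) *\<^sub>R ((?s * sgn (x $ j)) *\<^sub>R axis j 1)) = x"
    proof -
      have "(\<bar>x $ j\<bar> / ?s) * (?s * sgn (x $ j)) = x $ j" for j
        using s_pos by (simp add: abs_mult_sgn)
      then show ?thesis
        using basis_expansion[of x] by (simp add: scalar_mult_eq_scaleR)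
    qed
    finally show ?thesis .
  qed
qed

lemma J_l_zero: "J_l l (0 :: real ^ 'n::finite) = 0"
proof -
  have "ord_abs (0 :: real ^ 'n) UNIV ! i = 0" if "i < CARD('n)" for i
    using nth_mem[of i "ord_abs (0 :: real ^ 'n) UNIV"] that
    by (simp add: length_ord_abs set_ord_abs)
  then show ?thesis
    by (simp add: J_l_def)
qed

lemma Upsilon_scaled_axis:
  fixes l :: "nat \<Rightarrow> real" and j :: "'n::finite"
  shows "Upsilon l (-{j}) (c *\<^sub>R axis j 1 :: real ^ 'n) = l CARD('n) * \<bar>c\<bar>"
proof -
  let ?v = "c *\<^sub>R axis j 1 :: real ^ 'n"
  have "restr ?v (-{j}) = 0"
    by (simp add: vec_eq_iff restr_def axis_def)
  then have on_S: "J_l l (restr ?v (-{j})) = 0"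
    by (simp add: J_l_zero)
  have "ord_abs (restr ?v {j}) {j} ! 0 \<in> set (ord_abs (restr ?v {j}) {j})"
    by (intro nth_mem) (simp add: length_ord_abs)
  then have "ord_abs (restr ?v {j}) {j} ! 0 = \<bar>c\<bar>"
    by (simp add: set_ord_abs restr_def axis_def)
  moreover have "card (-{j}) = CARD('n) - 1"
    by (simp add: Compl_eq_Diff_UNIV card_Diff_singleton)
  ultimately have "Omega_c l (-{j}) (restr ?v {j}) = l CARD('n) * \<bar>c\<bar>"
    by (simp add: Omega_c_def Suc_leI)
  with on_S show ?thesis
    by (simp add: Upsilon_def)
qed

lemma Bg_eq_l1_ball:
  fixes l :: "nat \<Rightarrow> real" and J :: "'n::finite set"
  assumes mono: "\<And>i j. 1 \<le> i \<Longrightarrow> i \<le> j \<Longrightarrow> j \<le> CARD('n) \<Longrightarrow> l j \<le> l i"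
    and pos: "l CARD('n) > 0"
  shows "Bg l J = {x. l CARD('n) * (\<Sum>j\<in>UNIV. \<bar>x $ j\<bar>) \<le> 1}"
proof -
  let ?L = "l CARD('n)"
  have ball_eq: "{x :: real ^ 'n. ?L * (\<Sum>j\<in>UNIV. \<bar>x $ j\<bar>) \<le> 1}
      = {x. (\<Sum>j\<in>UNIV. \<bar>x $ j\<bar>) \<le> 1 / ?L}"
    using pos by (simp add: pos_le_divide_eq mult.commute)
  have Bbar_sub: "Bbar l \<subseteq> {x :: real ^ 'n. ?L * (\<Sum>j\<in>UNIV. \<bar>x $ j\<bar>) \<le> 1}"
  proof
    fix x :: "real ^ 'n" assume "x \<in> Bbar l"
    then obtain S where "Upsilon l S x \<le> 1"
      by (auto simp: Bbar_def)
    then show "x \<in> {x. ?L * (\<Sum>j\<in>UNIV. \<bar>x $ j\<bar>) \<le> 1}"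
      using l1_le_Upsilon[of l x S, OF mono] by simp
  qed
  have "Bg l J \<subseteq> {x :: real ^ 'n. ?L * (\<Sum>j\<in>UNIV. \<bar>x $ j\<bar>) \<le> 1}"
    unfolding Bg_def
  proof (rule hull_minimal)
    show "Bbar l \<union> flip J ` Bbar l \<subseteq> {x. ?L * (\<Sum>j\<in>UNIV. \<bar>x $ j\<bar>) \<le> 1}"
      using Bbar_sub by (auto simp: l1_flip)
    show "convex {x :: real ^ 'n. ?L * (\<Sum>j\<in>UNIV. \<bar>x $ j\<bar>) \<le> 1}"
      unfolding ball_eq by (rule convex_l1_ball)
  qed
  moreover have "c *\<^sub>R axis j 1 \<in> Bbar l" if "\<bar>c\<bar> \<le> 1 / ?L" for c and j :: 'n
  proof -
    have "Upsilon l (-{j}) (c *\<^sub>R axis j 1) \<le> 1"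
      using that pos by (simp add: Upsilon_scaled_axis pos_le_divide_eq mult.commute)
    then show ?thesis
      unfolding Bbar_def by blast
  qed
  then have "convex hull {c *\<^sub>R axis j 1 | c j. \<bar>c\<bar> \<le> 1 / ?L} \<subseteq> Bg l J"
    unfolding Bg_def by (intro hull_mono) blast
  then have "{x. ?L * (\<Sum>j\<in>UNIV. \<bar>x $ j\<bar>) \<le> 1} \<subseteq> Bg l J"
    unfolding ball_eq using l1_ball_subset_convex_hull_axes by blast
  ultimately show ?thesis
    by blast
qed

lemma Inf_scaled_sublevel:
  fixes f :: "'a::real_vector \<Rightarrow> real"
  assumes nonneg: "\<And>x. 0 \<le> f x"
    and homogeneous: "\<And>t x. 0 < t \<Longrightarrow> f (t *\<^sub>R x) = t * f x"
  shows "Inf {t. 0 < t \<and> x \<in> (\<lambda>y. t *\<^sub>R y) ` {y. f y \<le> 1}} = f x"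
proof -
  have scaled_iff: "x \<in> (\<lambda>y. t *\<^sub>R y) ` {y. f y \<le> 1} \<longleftrightarrow> f x \<le> t" if t: "0 < t" for t
  proof
    assume "x \<in> (\<lambda>y. t *\<^sub>R y) ` {y. f y \<le> 1}"
    then obtain y where "f y \<le> 1" and "x = t *\<^sub>R y"
      by blast
    then show "f x \<le> t"
      using t homogeneous by (simp add: mult_left_le)
  next
    assume "f x \<le> t"
    then have "f (inverse t *\<^sub>R x) \<le> 1"
      using t homogeneous by (simp add: field_simps)
    moreover have "x = t *\<^sub>R (inverse t *\<^sub>R x)"
      using t by simp
    ultimately show "x \<in> (\<lambda>y. t *\<^sub>R y) ` {y. f y \<le> 1}"
      by blast
  qed
  show ?thesis
  proof (cases "f x = 0")
    case True
    then have "{t. 0 < t \<and> x \<in> (\<lambda>y. t *\<^sub>R y) ` {y. f y \<le> 1}} = {0<..}"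
      using scaled_iff by auto
    with True show ?thesis
      by simp
  next
    case False
    then have "{t. 0 < t \<and> x \<in> (\<lambda>y. t *\<^sub>R y) ` {y. f y \<le> 1}} = {f x..}"
      using scaled_iff nonneg[of x] by force
    then show ?thesis
      by simp
  qed
qed

theorem lemma4:
  fixes l :: "nat \<Rightarrow> real" and J :: "'n::finite set" and \<beta> :: "real ^ 'n"
  assumes "l 1 \<le> 1"
    and "\<And>i j. 1 \<le> i \<Longrightarrow> i \<le> j \<Longrightarrow> j \<le> CARD('n) \<Longrightarrow> l j \<le> l i"
    and "l CARD('n) > 0"
  shows "gauge_g l J \<beta> = l CARD('n) * (\<Sum>j\<in>UNIV. \<bar>\<beta> $ j\<bar>)"
proof -
  have "Bg l J = {x. l CARD('n) * (\<Sum>j\<in>UNIV. \<bar>x $ j\<bar>) \<le> 1}"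
    using assms(2,3) by (rule Bg_eq_l1_ball)
  moreover have "l CARD('n) * (\<Sum>j\<in>UNIV. \<bar>(t *\<^sub>R x) $ j\<bar>) = t * (l CARD('n) * (\<Sum>j\<in>UNIV. \<bar>x $ j\<bar>))"
    if "0 < t" for t and x :: "real ^ 'n"
    using that by (simp add: abs_mult sum_distrib_left algebra_simps)
  ultimately show ?thesis
    unfolding gauge_g_def
    by (simp add: Inf_scaled_sublevel sum_nonneg assms(3) less_imp_le)
qed

end
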